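(* For all integers $m,n\ge0$: (1) $\displaystyle \mathrm B_{m+n}(x)=\sum_{j=0}^m\sum_{k=0}^n x^{m+n-j-k}j^{n-k}\binom nk S(m,j)\,\mathrm B_k(x)$; (2) $\displaystyle \mathrm B^{\mathrm B}_{m+n}(x)=\sum_{j=0}^m\sum_{k=0}^n x^{m+n-j-k}(2j+1)^{n-k}\binom nk S^{\mathrm B}(m,j)\,\mathrm B_k(2x)$, with the convention $0^0=1$.
   Context: A set partition of a finite set $\mathcal X\subset\mathbb Z$ is a set of nonempty pairwise disjoint sets (blocks) with union $\mathcal X$. A pair $(i,j)$ is an arc of $\Lambda$ if $i<j$ lie in the same block and $j$ is the least element of that block greater than $i$; $\mathrm{Arc}(\Lambda)$ is the set of arcs. $\Pi(n)$ is the set of partitions of $[n]=\{1,\dots,n\}$ ($\Pi(0)$ contains only the empty partition) and $\mathrm B_n(x)=\sum_{\Lambda\in\Pi(n)}x^{|\mathrm{Arc}(\Lambda)|}$. $S(m,j)$ is the number of partitions of $[m]$ into $j$ blocks (Stirling number of the second kind, $S(0,j)=1$ if $j=0$ and $0$ otherwise). With $[\pm n]=\{\pm1,\dots,\pm n\}$, $\Pi^{\mathrm B}(n)$ is the set of partitions $\Lambda$ of $\{0\}\cup[\pm n]$ such that $(i,j)\in\mathrm{Arc}(\Lambda)$ iff $(-j,-i)\in\mathrm{Arc}(\Lambda)$; $S^{\mathrm B}(m,j)$ is the number of elements of $\Pi^{\mathrm B}(m)$ with $2j+1$ blocks; and $\mathrm B^{\mathrm B}_n(x)=\sum_{\Lambda\in\Pi^{\mathrm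 B}(n)}x^{|\mathrm{Arc}(\Lambda)|/2}$.
   Formalization: $\Pi^{\mathrm B}(n)$ admits only partitions in which every block equal to its own negative contains 0, which also restricts the partitions counted by $S^{\mathrm B}(m,j)$ and summed in $\mathrm B^{\mathrm B}_n(x)$. The paper assumes this as well. *)

theory Defs
  imports Main "HOL-Library.Disjoint_Sets" "HOL-Combinatorics.Stirling"
begin

definition arcs :: "int set set \<Rightarrow> (int \<times> int) set" where
  "arcs P = {(i, j). \<exists>B\<in>P. i \<in> B \<and> j \<in> B \<and> i < j \<and> (\<forall>k\<in>B. i < k \<longrightarrow> j \<le> k)}"

definition PiA :: "nat \<Rightarrow> int set set set" where
  "PiA n = {P. partition_on {1..int n} P}"

definition bellA :: "nat \<Rightarrow> 'a::comm_ring_1 \<Rightarrow> 'a" where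
  "bellA n x = (\<Sum>P\<in>PiA n. x ^ card (arcs P))"

text \<open>Type B partitions of {0} \<union> [+-n]: arc set symmetric under (i,j) -> (-j,-i);
  moreover (standard type-B convention) the only block equal to its
  own negative is the block containing 0.\<close>
definition PiB :: "nat \<Rightarrow> int set set set" where
  "PiB n = {P. partition_on ({0} \<union> {1..int n} \<union> {- int n..-1}) P
              \<and> (\<forall>i j. (i, j) \<in> arcs P \<longleftrightarrow> (-j, -i) \<in> arcs P)
              \<and> (\<forall>B\<in>P. uminus ` B = B \<longrightarrow> 0 \<in> B)}"

definition StirlingB :: "nat \<Rightarrow> nat \<Rightarrow> nat" where
  "StirlingB m j = card {P\<in>PiB m. card P = 2 * j + 1}"

definition bellB :: "nat \<Rightarrow> 'a::comm_ring_1 \<Rightarrow> 'a" where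
  "bellB n x = (\<Sum>P\<in>PiB n. x ^ (card (arcs P) div 2))"

end

theory Submission
  imports Defs
begin

text \<open>A partition of an N-element set with b blocks has N - b arcs (every element except the
  maximum of its block starts exactly one arc), so B_N(x) = \<Sum>_i S(N,i) x^(N-i); likewise a type B
  partition with 2i + 1 blocks of the (2N+1)-element ground set has 2(N - i) arcs, so
  B^B_N(x) = \<Sum>_i S^B(N,i) x^(N-i). Inserting a new element t (resp. the pair t, -t) either opens new
  blocks or joins an existing block B (resp. B and -B), which gives the triangular recurrences
  S(N+1,i) = i S(N,i) + S(N,i-1) and S^B(N+1,i) = (2i+1) S^B(N,i) + S^B(N,i-1).
  Hence the row (S(N,i) x^(N-i))_i is T_h^N applied to the unit sequence, where
  (T_h w)(i) = h(i) w(i) + w(i-1) and h(i) = i x (resp. (2i+1) x). If h(j+l) = h(j) + f(l), then T_h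
  acts on a convolution u * v as the sum of the commuting operators (scaling u by h) and
  (T_f on v), so T_h^n (u * \<delta>) = \<Sum>_k C(n,k) (h^(n-k) u) * T_f^k \<delta>. Taking u = T_h^m \<delta> and
  summing the row entries gives both identities, with f(l) = l x in type A and f(l) = 2 l x in
  type B.\<close>

section \<open>Partitions and their arcs\<close>

lemma partition_on_block_eq:
  "partition_on A P \<Longrightarrow> C \<in> P \<Longrightarrow> D \<in> P \<Longrightarrow> x \<in> C \<Longrightarrow> x \<in> D \<Longrightarrow> C = D"
  unfolding partition_on_def disjoint_def by blast

lemma partition_on_block_subset: "partition_on A P \<Longrightarrow> C \<in> P \<Longrightarrow> C \<subseteq> A"
  unfolding partition_on_def by blast

lemma partition_on_block_ex: "partition_on A P \<Longrightarrow> x \<in> A \<Longrightarrow> \<exists>C\<in>P. x \<in> C"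
  unfolding partition_on_def by blast

definition block_arcs :: "int set \<Rightarrow> (int \<times> int) set" where
  "block_arcs C = {(i, j). i \<in> C \<and> j \<in> C \<and> i < j \<and> (\<forall>k\<in>C. i < k \<longrightarrow> j \<le> k)}"

lemma arcs_eq_Union_block_arcs: "arcs P = \<Union>(block_arcs ` P)"
  unfolding arcs_def block_arcs_def by blast

lemma card_block_arcs:
  assumes "finite C" "C \<noteq> {}"
  shows "card (block_arcs C) = card C - 1"
proof -
  have bij: "bij_betw fst (block_arcs C) (C - {Max C})"
  proof (rule bij_betw_imageI)
    show "inj_on fst (block_arcs C)"
    proof (rule inj_onI)
      fix x y assume xy: "x \<in> block_arcs C" "y \<in> block_arcs C" "fst x = fst y"
      obtain i j j' where ij: "x = (i, j)" "y = (i, j')" using xy(3) by (cases x, cases y) auto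
      with xy have "j \<le> j'" "j' \<le> j" unfolding block_arcs_def by auto
      then show "x = y" using ij by simp
    qed
    show "fst ` block_arcs C = C - {Max C}"
    proof
      show "fst ` block_arcs C \<subseteq> C - {Max C}"
      proof
        fix i assume "i \<in> fst ` block_arcs C"
        then obtain j where "i \<in> C" "j \<in> C" "i < j" by (auto simp: block_arcs_def)
        moreover have "j \<le> Max C" using assms \<open>j \<in> C\<close> by simp
        ultimately show "i \<in> C - {Max C}" by auto
      qed
    next
      show "C - {Max C} \<subseteq> fst ` block_arcs C"
      proof
        fix i assume i: "i \<in> C - {Max C}"
        define S where "S = {k \<in> C. i < k}"
        have "i < Max C" using i assms by (simp add: order.not_eq_order_implies_strict)
        then have "Max C \<in> S" "finite S" using assms by (simp_all add: S_def)
        then have "Min S \<in> S" "\<forall>k\<in>S. Min S \<le> k" by (auto intro: Min_in)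
        then have "(i, Min S) \<in> block_arcs C" using i by (auto simp: block_arcs_def S_def)
        then show "i \<in> fst ` block_arcs C" by (rule rev_image_eqI) simp
      qed
    qed
  qed
  show ?thesis using bij_betw_same_card[OF bij] assms by simp
qed

lemma card_arcs:
  assumes P: "partition_on A P" and "finite A"
  shows "card (arcs P) = card A - card P"
proof -
  have blocks: "finite C" "C \<noteq> {}" if "C \<in> P" for C
    using finite_subset[OF partition_on_block_subset[OF P that] \<open>finite A\<close>] partition_onD3[OF P] that
    by auto
  have finP: "finite P" using finite_elements[OF \<open>finite A\<close> P] .
  have fin_arcs: "\<forall>C\<in>P. finite (block_arcs C)"
  proof
    fix C assume "C \<in> P"
    show "finite (block_arcs C)"
      by (rule finite_subset[of _ "C \<times> C"]) (use blocks[OF \<open>C \<in> P\<close>] in \<open>auto simp: block_arcs_def\<close>)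
  qed
  have disjoint_arcs: "\<forall>C\<in>P. \<forall>D\<in>P. C \<noteq> D \<longrightarrow> block_arcs C \<inter> block_arcs D = {}"
  proof (intro ballI impI)
    fix C D assume "C \<in> P" "D \<in> P" "C \<noteq> D"
    then show "block_arcs C \<inter> block_arcs D = {}"
      using partition_on_block_eq[OF P \<open>C \<in> P\<close> \<open>D \<in> P\<close>] unfolding block_arcs_def by auto
  qed
  have "card (arcs P) = (\<Sum>C\<in>P. card (block_arcs C))"
    unfolding arcs_eq_Union_block_arcs by (rule card_UN_disjoint[OF finP fin_arcs disjoint_arcs])
  also have "\<dots> = (\<Sum>C\<in>P. card C - 1)"
    using blocks by (simp add: card_block_arcs)
  also have "\<dots> = (\<Sum>C\<in>P. card C) - card P"
    using blocks by (subst sum_subtractf_nat) (auto simp: Suc_le_eq card_gt_0_iff)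
  also have "(\<Sum>C\<in>P. card C) = card A"
    using product_partition[OF P] blocks by simp
  finally show ?thesis .
qed

definition restrict_partition :: "'a set \<Rightarrow> 'a set set \<Rightarrow> 'a set set" where
  "restrict_partition A P = (\<inter>) A ` P - {{}}"

definition extend_blocks :: "('a set \<Rightarrow> 'a set) \<Rightarrow> 'a set set \<Rightarrow> 'a set set" where
  "extend_blocks E Q = (\<lambda>C. C \<union> E C) ` Q"

lemma partition_on_restrict_partition:
  "partition_on B P \<Longrightarrow> A \<subseteq> B \<Longrightarrow> partition_on A (restrict_partition A P)"
  using partition_on_restrict[of B P A] by (simp add: restrict_partition_def Int_absorb2)

lemma restrict_partition_self:
  assumes "partition_on A Q"
  shows "restrict_partition A Q = Q"
proof -
  have "(\<inter>) A ` Q = Q"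
    using partition_on_block_subset[OF assms] by (simp add: Int_absorb1 cong: image_cong)
  then show ?thesis using partition_onD3[OF assms] by (simp add: restrict_partition_def)
qed

lemma restrict_partition_insert:
  "A \<inter> C = {} \<Longrightarrow> restrict_partition A (insert C P) = restrict_partition A P"
  by (auto simp: restrict_partition_def)

lemma partition_on_extend_blocks:
  assumes Q: "partition_on A Q" and "A \<inter> N = {}"
    and "\<And>C. C \<in> Q \<Longrightarrow> E C \<subseteq> N" and "disjoint_family_on E Q" and "N \<subseteq> \<Union>(E ` Q)"
  shows "partition_on (A \<union> N) (extend_blocks E Q)"
proof (rule partition_onI)
  show "\<Union>(extend_blocks E Q) = A \<union> N"
    using partition_onD1[OF Q] assms(3,5) by (auto simp: extend_blocks_def)
  show "{} \<notin> extend_blocks E Q"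
    using partition_onD3[OF Q] by (auto simp: extend_blocks_def)
next
  fix p q assume "p \<in> extend_blocks E Q" "q \<in> extend_blocks E Q" "p \<noteq> q"
  then obtain C D where CD: "C \<in> Q" "D \<in> Q" "C \<noteq> D" and pq: "p = C \<union> E C" "q = D \<union> E D"
    by (auto simp: extend_blocks_def)
  have "C \<subseteq> A" "D \<subseteq> A" using partition_on_block_subset[OF Q] CD by auto
  moreover have "C \<inter> D = {}" using partition_on_block_eq[OF Q CD(1,2)] CD(3) by blast
  moreover have "E C \<inter> E D = {}" using assms(4) CD by (simp add: disjoint_family_on_def)
  moreover have "E C \<subseteq> N" "E D \<subseteq> N" using assms(3) CD by auto
  ultimately show "disjnt p q" using assms(2) unfolding pq disjnt_def by blast
qed

lemma restrict_extend_blocks: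
  assumes "partition_on A Q" and "\<And>C. C \<in> Q \<Longrightarrow> A \<inter> E C = {}"
  shows "restrict_partition A (extend_blocks E Q) = Q"
proof -
  have "A \<inter> (C \<union> E C) = C" if "C \<in> Q" for C
    using partition_on_block_subset[OF assms(1) that] assms(2)[OF that] by blast
  then have "(\<inter>) A ` extend_blocks E Q = Q"
    unfolding extend_blocks_def image_image by simp
  then show ?thesis using partition_onD3[OF assms(1)] by (simp add: restrict_partition_def)
qed

lemma card_extend_blocks:
  assumes "partition_on A Q" and "\<And>C. C \<in> Q \<Longrightarrow> A \<inter> E C = {}"
  shows "card (extend_blocks E Q) = card Q"
proof -
  have "inj_on (\<lambda>C. C \<union> E C) Q"
  proof (rule inj_on_inverseI[where g="(\<inter>) A"])
    show "A \<inter> (C \<union> E C) = C" if "C \<in> Q" for C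
      using partition_on_block_subset[OF assms(1) that] assms(2)[OF that] by blast
  qed
  then show ?thesis by (simp add: extend_blocks_def card_image)
qed

lemma extend_blocks_restrict_partition:
  assumes "partition_on (A \<union> N) P" and "A \<inter> N = {}"
    and "\<And>C. C \<in> P \<Longrightarrow> A \<inter> C \<noteq> {}" and "\<And>C. C \<in> P \<Longrightarrow> C \<inter> N = E (A \<inter> C)"
  shows "P = extend_blocks E (restrict_partition A P)"
proof -
  have "restrict_partition A P = (\<inter>) A ` P"
    using assms(3) by (auto simp: restrict_partition_def)
  moreover have "A \<inter> C \<union> E (A \<inter> C) = C" if "C \<in> P" for C
    using partition_on_block_subset[OF assms(1) that] assms(4)[OF that] by blast
  ultimately show ?thesis by (simp add: extend_blocks_def image_image)
qed

lemma extend_blocks_meets: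
  assumes "partition_on A Q" and "D \<in> extend_blocks E Q"
  shows "A \<inter> D \<noteq> {}"
proof -
  obtain C where C: "C \<in> Q" "D = C \<union> E C" using assms(2) by (auto simp: extend_blocks_def)
  then have "C \<subseteq> A" "C \<noteq> {}"
    using partition_on_block_subset[OF assms(1)] partition_onD3[OF assms(1)] by auto
  then show ?thesis using C(2) by blast
qed

lemma inj_on_extend_blocks_marked:
  assumes Q: "partition_on A Q" and disj: "\<And>B C. A \<inter> E B C = {}"
    and mark: "\<And>B C. B \<in> Q \<Longrightarrow> C \<in> Q \<Longrightarrow> t \<in> E B C \<longleftrightarrow> C = B"
  shows "inj_on (\<lambda>B. extend_blocks (E B) Q) Q"
proof (rule inj_onI)
  fix B B' assume B: "B \<in> Q" "B' \<in> Q" and eq: "extend_blocks (E B) Q = extend_blocks (E B') Q"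
  have "B \<union> E B B \<in> extend_blocks (E B) Q"
    unfolding extend_blocks_def using B(1) by (rule rev_image_eqI) simp
  then have "B \<union> E B B \<in> extend_blocks (E B') Q" by (simp only: eq)
  then obtain C where C: "C \<in> Q" and eqC: "B \<union> E B B = C \<union> E B' C"
    by (auto simp: extend_blocks_def)
  have "A \<inter> (B \<union> E B B) = B" "A \<inter> (C \<union> E B' C) = C"
    using partition_on_block_subset[OF Q B(1)] partition_on_block_subset[OF Q C] disj by blast+
  then have "B = C" using eqC by simp
  have "t \<in> E B B" using mark[OF B(1) B(1)] by simp
  then have "t \<notin> A" "t \<in> C \<union> E B' C" using disj[of B B] eqC by blast+
  then have "t \<in> E B' C" using partition_on_block_subset[OF Q C] by blast
  then show "B = B'" using mark[OF B(2) C] \<open>B = C\<close> by simp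
qed

lemma card_blocks_by_fibres:
  fixes r :: "'a set set \<Rightarrow> 'b set set"
  assumes "finite \<P>" "finite \<Q>" and "r ` \<P> \<subseteq> \<Q>"
    and fibre: "\<And>Q. Q \<in> \<Q> \<Longrightarrow> {P \<in> \<P>. r P = Q} = insert (new Q) (ext Q ` Q)"
    and new: "\<And>Q. Q \<in> \<Q> \<Longrightarrow> new Q \<notin> ext Q ` Q" "\<And>Q. Q \<in> \<Q> \<Longrightarrow> card (new Q) = card Q + d"
    and ext: "\<And>Q. Q \<in> \<Q> \<Longrightarrow> inj_on (ext Q) Q" "\<And>Q B. Q \<in> \<Q> \<Longrightarrow> B \<in> Q \<Longrightarrow> card (ext Q B) = card Q"
    and finite: "\<And>Q. Q \<in> \<Q> \<Longrightarrow> finite Q"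
  shows "card {P \<in> \<P>. card P = k} = card {Q \<in> \<Q>. card Q + d = k} + k * card {Q \<in> \<Q>. card Q = k}"
proof -
  have "card {P \<in> \<P>. card P = k} = (\<Sum>P\<in>\<P>. of_bool (card P = k))"
    using assms(1) by (simp add: sum.If_cases Int_def)
  also have "\<dots> = (\<Sum>Q\<in>\<Q>. \<Sum>P\<in>{P \<in> \<P>. r P = Q}. of_bool (card P = k))"
    using assms(1-3) by (rule sum.group[symmetric])
  also have "\<dots> = (\<Sum>Q\<in>\<Q>. of_bool (card Q + d = k) + k * of_bool (card Q = k))"
  proof (rule sum.cong[OF refl])
    fix Q assume Q: "Q \<in> \<Q>"
    have "(\<Sum>P\<in>{P \<in> \<P>. r P = Q}. of_bool (card P = k))
        = of_bool (card (new Q) = k) + (\<Sum>B\<in>Q. of_bool (card (ext Q B) = k))"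
      unfolding fibre[OF Q] sum.insert[OF finite_imageI[OF finite[OF Q]] new(1)[OF Q]]
        sum.reindex[OF ext(1)[OF Q]] comp_def ..
    also have "\<dots> = of_bool (card Q + d = k) + k * of_bool (card Q = k)"
      using new(2)[OF Q] ext(2)[OF Q] by simp
    finally show "(\<Sum>P\<in>{P \<in> \<P>. r P = Q}. of_bool (card P = k)) = of_bool (card Q + d = k) + k * of_bool (card Q = k)" .
  qed
  also have "\<dots> = card {Q \<in> \<Q>. card Q + d = k} + k * card {Q \<in> \<Q>. card Q = k}"
    using assms(2) by (simp add: sum.distrib sum.If_cases sum_distrib_left Int_def mult.commute)
  finally show ?thesis .
qed

section \<open>Stirling numbers count partitions\<close>

definition insert_into_block :: "'a \<Rightarrow> 'a set set \<Rightarrow> 'a set \<Rightarrow> 'a set set" where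
  "insert_into_block t Q B = extend_blocks (\<lambda>C. if C = B then {t} else {}) Q"

lemma partition_on_insert_singleton:
  assumes Q: "partition_on A Q" and t: "t \<notin> A"
  shows "partition_on (insert t A) (insert {t} Q)" "restrict_partition A (insert {t} Q) = Q"
proof -
  have "disjnt {t} (\<Union>Q)" using partition_onD1[OF Q] t by (auto simp: disjnt_def)
  then show "partition_on (insert t A) (insert {t} Q)"
    using partition_on_insert[of "{t}" Q "insert t A"] Q t by (simp add: Diff_insert_absorb)
  show "restrict_partition A (insert {t} Q) = Q"
    using t by (simp add: restrict_partition_insert restrict_partition_self Q)
qed

lemma partition_on_insert_into_block:
  assumes Q: "partition_on A Q" and t: "t \<notin> A" and B: "B \<in> Q"
  shows "partition_on (insert t A) (insert_into_block t Q B)"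
    "restrict_partition A (insert_into_block t Q B) = Q"
proof -
  have "partition_on (A \<union> {t}) (insert_into_block t Q B)"
    unfolding insert_into_block_def
    by (rule partition_on_extend_blocks[OF Q]) (use t B in \<open>auto simp: disjoint_family_on_def\<close>)
  then show "partition_on (insert t A) (insert_into_block t Q B)" by simp
  show "restrict_partition A (insert_into_block t Q B) = Q"
    unfolding insert_into_block_def by (rule restrict_extend_blocks[OF Q]) (use t in auto)
qed

lemma partition_on_insert_cases:
  assumes P: "partition_on (insert t A) P" and t: "t \<notin> A"
  obtains "P = insert {t} (restrict_partition A P)"
    | B where "B \<in> restrict_partition A P" "P = insert_into_block t (restrict_partition A P) B"
proof -
  obtain Ct where Ct: "Ct \<in> P" "t \<in> Ct" using partition_on_block_ex[OF P, of t] by blast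
  have others: "C \<subseteq> A" "C \<noteq> {}" if "C \<in> P" "C \<noteq> Ct" for C
  proof -
    have "t \<notin> C" using partition_on_block_eq[OF P that(1) Ct(1) _ Ct(2)] that(2) by blast
    then show "C \<subseteq> A" using partition_on_block_subset[OF P that(1)] by blast
    show "C \<noteq> {}" using partition_onD3[OF P] that(1) by blast
  qed
  show ?thesis
  proof (cases "Ct = {t}")
    case True
    define R where "R = P - {{t}}"
    have P_eq: "P = insert {t} R" using Ct True by (auto simp: R_def)
    have "disjnt {t} (\<Union>R)" using others True t by (fastforce simp: R_def disjnt_def)
    then have "partition_on A R"
      using partition_on_insert[of "{t}" R "insert t A"] P t unfolding P_eq by (simp add: Diff_insert_absorb)
    then have "restrict_partition A P = R"
      unfolding P_eq using t by (simp add: restrict_partition_insert restrict_partition_self)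
    then show ?thesis by (intro that(1)) (simp add: P_eq[symmetric])
  next
    case False
    define B where "B = A \<inter> Ct"
    have "B \<noteq> {}"
      using False Ct partition_on_block_subset[OF P Ct(1)] unfolding B_def by blast
    have "C \<inter> {t} = (if A \<inter> C = B then {t} else {})" if C: "C \<in> P" for C
    proof (cases "C = Ct")
      case False
      then have "A \<inter> C \<noteq> B \<and> t \<notin> C"
        using partition_on_block_eq[OF P C Ct(1)] Ct(2) \<open>B \<noteq> {}\<close> unfolding B_def by blast
      then show ?thesis by auto
    qed (use Ct in \<open>auto simp: B_def\<close>)
    moreover have "A \<inter> C \<noteq> {}" if "C \<in> P" for C
      using others[OF that] \<open>B \<noteq> {}\<close> B_def by (cases "C = Ct") auto
    moreover have "partition_on (A \<union> {t}) P" using P by simp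
    ultimately have "P = insert_into_block t (restrict_partition A P) B"
      unfolding insert_into_block_def using t
      by (intro extend_blocks_restrict_partition[where N="{t}"]) auto
    moreover have "B \<in> restrict_partition A P"
      using Ct \<open>B \<noteq> {}\<close> by (auto simp: restrict_partition_def B_def)
    ultimately show ?thesis by (rule that(2)[rotated])
  qed
qed

lemma partitions_insert_fibre:
  assumes Q: "partition_on A Q" and t: "t \<notin> A"
  shows "{P. partition_on (insert t A) P \<and> restrict_partition A P = Q}
    = insert (insert {t} Q) (insert_into_block t Q ` Q)"
proof (intro equalityI subsetI)
  fix P assume "P \<in> {P. partition_on (insert t A) P \<and> restrict_partition A P = Q}"
  then have P: "partition_on (insert t A) P" and res: "restrict_partition A P = Q" by auto
  from P t show "P \<in> insert (insert {t} Q) (insert_into_block t Q ` Q)"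
  proof (cases rule: partition_on_insert_cases)
    case 1
    then have "P = insert {t} Q" unfolding res .
    then show ?thesis by simp
  next
    case (2 B)
    then have "B \<in> Q" "P = insert_into_block t Q B" unfolding res .
    then show ?thesis by simp
  qed
next
  fix P assume "P \<in> insert (insert {t} Q) (insert_into_block t Q ` Q)"
  then show "P \<in> {P. partition_on (insert t A) P \<and> restrict_partition A P = Q}"
    using partition_on_insert_singleton[OF Q t] partition_on_insert_into_block[OF Q t] by auto
qed

lemma card_partition_on_le:
  assumes "partition_on A P" and "finite A"
  shows "card P \<le> card A"
proof -
  have "card P = (\<Sum>C\<in>P. 1)" by simp
  also have "\<dots> \<le> (\<Sum>C\<in>P. card C)"
  proof (rule sum_mono)
    fix C assume "C \<in> P"
    then have "finite C" "C \<noteq> {}"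
      using finite_subset[OF partition_on_block_subset[OF assms(1)] assms(2)] partition_onD3[OF assms(1)]
      by auto
    then show "1 \<le> card C" by (simp add: Suc_le_eq card_gt_0_iff)
  qed
  also have "\<dots> = card A"
    using product_partition[OF assms(1)] finite_subset[OF partition_on_block_subset[OF assms(1)] assms(2)]
    by simp
  finally show ?thesis .
qed

lemma card_partition_on_insert_blocks:
  assumes "finite A" and t: "t \<notin> A"
  shows "card {P. partition_on (insert t A) P \<and> card P = k}
    = card {Q. partition_on A Q \<and> card Q + 1 = k} + k * card {Q. partition_on A Q \<and> card Q = k}"
proof -
  have "card {P \<in> {P. partition_on (insert t A) P}. card P = k}
    = card {Q \<in> {Q. partition_on A Q}. card Q + 1 = k} + k * card {Q \<in> {Q. partition_on A Q}. card Q = k}"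
  proof (rule card_blocks_by_fibres[where r="restrict_partition A" and new="insert {t}"
        and ext="insert_into_block t"])
    show "finite {P. partition_on (insert t A) P}" "finite {Q. partition_on A Q}"
      using assms(1) by (simp_all add: finitely_many_partition_on)
    show "restrict_partition A ` {P. partition_on (insert t A) P} \<subseteq> {Q. partition_on A Q}"
      by (auto intro: partition_on_restrict_partition)
    fix Q assume "Q \<in> {Q. partition_on A Q}"
    then have Q: "partition_on A Q" by simp
    show "{P \<in> {P. partition_on (insert t A) P}. restrict_partition A P = Q}
        = insert (insert {t} Q) (insert_into_block t Q ` Q)"
      using partitions_insert_fibre[OF Q t] by simp
    show "finite Q" using finite_elements[OF assms(1) Q] .
    moreover have "{t} \<notin> Q" using partition_on_block_subset[OF Q] t by blast
    ultimately show "card (insert {t} Q) = card Q + 1" by simp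
    show "card (insert_into_block t Q B) = card Q" for B
      unfolding insert_into_block_def by (rule card_extend_blocks[OF Q]) (use t in auto)
    show "insert {t} Q \<notin> insert_into_block t Q ` Q"
      using extend_blocks_meets[OF Q, of "{t}"] t unfolding insert_into_block_def by auto
    show "inj_on (insert_into_block t Q) Q"
      unfolding insert_into_block_def
      by (rule inj_on_extend_blocks_marked[OF Q, where t=t]) (use t in auto)
  qed
  then show ?thesis by simp
qed

lemma card_partition_on_Stirling:
  assumes "finite A"
  shows "card {P. partition_on A P \<and> card P = k} = Stirling (card A) k"
  using assms
proof (induction A arbitrary: k rule: finite_induct)
  case empty
  have eq: "{P. partition_on {} P \<and> card P = k} = (if k = 0 then {{}} else {})"
    by (auto simp: partition_on_empty)
  show ?case unfolding eq by (cases k) simp_all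
next
  case (insert t A)
  then show ?case
    by (cases k) (simp_all add: card_partition_on_insert_blocks)
qed

lemma sum_group_by_value:
  fixes f :: "'a \<Rightarrow> nat" and g :: "nat \<Rightarrow> 'b::semiring_1"
  assumes "finite S" and "f ` S \<subseteq> {..N}"
  shows "(\<Sum>x\<in>S. g (f x)) = (\<Sum>k\<le>N. of_nat (card {x \<in> S. f x = k}) * g k)"
proof -
  have "(\<Sum>x\<in>S. g (f x)) = (\<Sum>k\<le>N. \<Sum>x\<in>{x \<in> S. f x = k}. g (f x))"
    using assms by (intro sum.group[symmetric]) auto
  also have "\<dots> = (\<Sum>k\<le>N. of_nat (card {x \<in> S. f x = k}) * g k)"
    by (intro sum.cong refl) simp
  finally show ?thesis .
qed

lemma bellA_eq_sum_Stirling: "bellA n x = (\<Sum>k\<le>n. of_nat (Stirling n k) * x ^ (n - k))"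
proof -
  have part: "partition_on {1..int n} P" if "P \<in> PiA n" for P
    using that by (simp add: PiA_def)
  have "bellA n x = (\<Sum>P\<in>PiA n. x ^ (n - card P))"
    unfolding bellA_def by (intro sum.cong refl) (simp add: card_arcs[OF part])
  also have "\<dots> = (\<Sum>k\<le>n. of_nat (card {P \<in> PiA n. card P = k}) * x ^ (n - k))"
    using card_partition_on_le[OF part]
    by (intro sum_group_by_value) (auto simp: PiA_def finitely_many_partition_on)
  also have "\<dots> = (\<Sum>k\<le>n. of_nat (Stirling n k) * x ^ (n - k))"
    using card_partition_on_Stirling[of "{1..int n}"] by (simp add: PiA_def)
  finally show ?thesis .
qed

section \<open>Type B partitions\<close>

lemma mem_uminus_image: "(x::'a::group_add) \<in> uminus ` C \<longleftrightarrow> -x \<in> C"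
  by (metis image_iff minus_minus)

lemma uminus_uminus_image [simp]: "uminus ` uminus ` (C::'a::group_add set) = C"
  by (simp add: image_image)

lemma uminus_image_Int:
  assumes "\<And>x. x \<in> X \<Longrightarrow> -x \<in> X"
  shows "uminus ` (X \<inter> C) = X \<inter> uminus ` (C::'a::group_add set)"
  using assms by (auto simp: mem_uminus_image) (metis minus_minus)

definition sym_partitions :: "int set \<Rightarrow> int set set set" where
  "sym_partitions X = {P. partition_on X P \<and> (\<forall>C\<in>P. uminus ` C \<in> P) \<and> (\<forall>C\<in>P. uminus ` C = C \<longrightarrow> 0 \<in> C)}"

lemma arcs_sym_if_neg_closed:
  assumes closed: "\<And>C. C \<in> P \<Longrightarrow> uminus ` C \<in> P" and "(i, j) \<in> arcs P"
  shows "(-j, -i) \<in> arcs P"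
proof -
  from assms(2) obtain C where C: "C \<in> P" "i \<in> C" "j \<in> C" "i < j"
    and least: "\<And>k. k \<in> C \<Longrightarrow> i < k \<Longrightarrow> j \<le> k"
    unfolding arcs_def by blast
  have "-i \<le> k" if "k \<in> uminus ` C" "-j < k" for k
  proof -
    have "-k \<in> C" using that(1) by (simp add: mem_uminus_image)
    then have "\<not> i < -k" using least[of "-k"] that(2) by linarith
    then show ?thesis by linarith
  qed
  moreover have "-j \<in> uminus ` C" "-i \<in> uminus ` C" using C(2,3) by auto
  ultimately have "\<exists>B\<in>P. -j \<in> B \<and> -i \<in> B \<and> -j < -i \<and> (\<forall>k\<in>B. -j < k \<longrightarrow> -i \<le> k)"
    using closed[OF C(1)] C(4) by (intro bexI[of _ "uminus ` C"]) auto
  then show ?thesis unfolding arcs_def by simp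
qed

lemma arcs_sym_same_block:
  assumes P: "partition_on X P" and "finite X"
    and sym: "\<And>i j. (i, j) \<in> arcs P \<Longrightarrow> (-j, -i) \<in> arcs P"
    and C: "C \<in> P" "i \<in> C" "j \<in> C" "i < j"
  shows "\<exists>D\<in>P. -i \<in> D \<and> -j \<in> D"
  using C(2-4)
proof (induction "nat (j - i)" arbitrary: i rule: less_induct)
  case less
  define s where "s = Min {k \<in> C. i < k}"
  have fin: "finite {k \<in> C. i < k}"
    using finite_subset[OF partition_on_block_subset[OF P C(1)] \<open>finite X\<close>] by simp
  have "s \<in> {k \<in> C. i < k}" unfolding s_def using fin less.prems by (intro Min_in) auto
  moreover have "s \<le> k" if "k \<in> C" "i < k" for k unfolding s_def using fin that by simp
  ultimately have s: "s \<in> C" "i < s" "s \<le> j" and "(i, s) \<in> arcs P"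
    using C(1) less.prems unfolding arcs_def by auto
  then obtain D where D: "D \<in> P" "-s \<in> D" "-i \<in> D" using sym unfolding arcs_def by blast
  show ?case
  proof (cases "s = j")
    case False
    then obtain D' where "D' \<in> P" "-s \<in> D'" "-j \<in> D'"
      using less.hyps[of s] s less.prems by auto
    then show ?thesis using D partition_on_block_eq[OF P D(1) _ D(2)] by blast
  qed (use D in blast)
qed

lemma neg_closed_if_arcs_sym:
  assumes P: "partition_on X P" and "finite X" and X: "\<And>x. x \<in> X \<Longrightarrow> -x \<in> X"
    and sym: "\<And>i j. (i, j) \<in> arcs P \<Longrightarrow> (-j, -i) \<in> arcs P"
    and C: "C \<in> P"
  shows "uminus ` C \<in> P"
proof -
  have same: "\<exists>D\<in>P. -i \<in> D \<and> -j \<in> D" if "E \<in> P" "i \<in> E" "j \<in> E" for E i j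
  proof (cases i j rule: linorder_cases)
    case equal
    then show ?thesis
      using partition_on_block_ex[OF P X] partition_on_block_subset[OF P that(1)] that(2) by blast
  qed (use arcs_sym_same_block[OF P \<open>finite X\<close> sym that(1)] that in auto)
  obtain c where c: "c \<in> C" using partition_onD3[OF P] C by (metis equals0I)
  obtain D where D: "D \<in> P" "-c \<in> D"
    using partition_on_block_ex[OF P X] partition_on_block_subset[OF P C] c by blast
  have "uminus ` C = D"
  proof (intro equalityI subsetI)
    fix y assume "y \<in> uminus ` C"
    then have "-y \<in> C" by (simp add: mem_uminus_image)
    from same[OF C this c] obtain D' where "D' \<in> P" "y \<in> D'" "-c \<in> D'" by auto
    then show "y \<in> D" using partition_on_block_eq[OF P _ D(1) _ D(2)] by blast
  next
    fix y assume "y \<in> D"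
    from same[OF D(1) this D(2)] obtain E where "E \<in> P" "-y \<in> E" "c \<in> E" by auto
    then show "y \<in> uminus ` C" using partition_on_block_eq[OF P _ C _ c] by (auto simp: mem_uminus_image)
  qed
  then show ?thesis using D by simp
qed

lemma PiB_eq_sym_partitions: "PiB n = sym_partitions {- int n..int n}"
proof -
  have X: "{0} \<union> {1..int n} \<union> {- int n..-1} = {- int n..int n}" by auto
  have "(\<forall>i j. (i, j) \<in> arcs P \<longleftrightarrow> (-j, -i) \<in> arcs P) \<longleftrightarrow> (\<forall>C\<in>P. uminus ` C \<in> P)"
    if P: "partition_on {- int n..int n} P" for P
  proof
    assume "\<forall>i j. (i, j) \<in> arcs P \<longleftrightarrow> (-j, -i) \<in> arcs P"
    then show "\<forall>C\<in>P. uminus ` C \<in> P"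
      using neg_closed_if_arcs_sym[OF P finite_atLeastAtMost_int] by auto
  next
    assume "\<forall>C\<in>P. uminus ` C \<in> P"
    then show "\<forall>i j. (i, j) \<in> arcs P \<longleftrightarrow> (-j, -i) \<in> arcs P"
      using arcs_sym_if_neg_closed[of P] by (metis minus_minus)
  qed
  then show ?thesis unfolding PiB_def sym_partitions_def X by blast
qed

lemma sym_partitions_neg_block:
  assumes "P \<in> sym_partitions X" "C \<in> P" "D \<in> P" "x \<in> C" "-x \<in> D"
  shows "D = uminus ` C"
  using assms partition_on_block_eq[of X P D "uminus ` C" "-x"] by (auto simp: sym_partitions_def)

locale sym_insertion =
  fixes X :: "int set" and t :: int
  assumes sym: "\<And>x. x \<in> X \<Longrightarrow> -x \<in> X" and t_notin: "t \<notin> X" and t_nonzero: "t \<noteq> 0"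
begin

lemma neg_t_notin: "-t \<notin> X"
  using sym t_notin by force

definition new_pair :: "int set set \<Rightarrow> int set set" where
  "new_pair Q = insert {t} (insert {-t} Q)"

text \<open>If B is self-negative, both t and -t join B.\<close>

definition signed_ext :: "int set \<Rightarrow> int set \<Rightarrow> int set" where
  "signed_ext B C = (if C = B then {t} else {}) \<union> (if C = uminus ` B then {-t} else {})"

definition join_pair :: "int set set \<Rightarrow> int set \<Rightarrow> int set set" where
  "join_pair Q B = extend_blocks (signed_ext B) Q"

lemma signed_ext_disjoint: "X \<inter> signed_ext B C = {}"
  using t_notin neg_t_notin by (auto simp: signed_ext_def)

lemma uminus_signed_ext: "uminus ` signed_ext B C = signed_ext B (uminus ` C)"
proof -
  have "uminus ` C = uminus ` B \<longleftrightarrow> C = B" "uminus ` C = B \<longleftrightarrow> C = uminus ` B"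
    by (metis uminus_uminus_image)+
  then show ?thesis by (simp add: signed_ext_def image_Un if_distrib[of "image uminus"] Un_commute)
qed

lemma restrict_sym_partition:
  assumes P: "P \<in> sym_partitions (X \<union> {t, -t})"
  shows "restrict_partition X P \<in> sym_partitions X"
proof -
  have Pp: "partition_on (X \<union> {t, -t}) P" using P by (simp add: sym_partitions_def)
  have "uminus ` D \<in> restrict_partition X P \<and> (uminus ` D = D \<longrightarrow> 0 \<in> D)"
    if D: "D \<in> restrict_partition X P" for D
  proof -
    obtain C where C: "C \<in> P" "D = X \<inter> C" "D \<noteq> {}"
      using D by (auto simp: restrict_partition_def)
    have neg: "uminus ` D = X \<inter> uminus ` C" using C(2) uminus_image_Int[OF sym] by simp
    have "uminus ` C \<in> P" using P C(1) by (simp add: sym_partitions_def)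
    then have "uminus ` D \<in> restrict_partition X P"
      using neg C(3) by (auto simp: restrict_partition_def)
    moreover have "0 \<in> D" if "uminus ` D = D"
    proof -
      obtain d where "d \<in> D" using C(3) by blast
      then have "-d \<in> C" "d \<in> C" using that C(2) by (auto simp: mem_uminus_image)
      then have "uminus ` C = C" using sym_partitions_neg_block[OF P C(1) C(1)] by simp
      then have "0 \<in> C" using P C(1) by (simp add: sym_partitions_def)
      moreover have "C \<subseteq> X \<union> {t, -t}" using partition_on_block_subset[OF Pp C(1)] .
      ultimately show "0 \<in> D" using C(2) t_nonzero by auto
    qed
    ultimately show ?thesis by blast
  qed
  moreover have "partition_on X (restrict_partition X P)"
    by (rule partition_on_restrict_partition[OF Pp]) blast
  ultimately show ?thesis by (simp add: sym_partitions_def)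
qed

lemma new_pair_mem:
  assumes Q: "Q \<in> sym_partitions X"
  shows "new_pair Q \<in> sym_partitions (X \<union> {t, -t})" "restrict_partition X (new_pair Q) = Q"
proof -
  have Qp: "partition_on X Q" using Q by (simp add: sym_partitions_def)
  have "disjnt {-t} (\<Union>Q)" "disjnt {t} (\<Union>(insert {-t} Q))"
    using partition_onD1[OF Qp] t_notin neg_t_notin t_nonzero by (auto simp: disjnt_def)
  moreover have "X \<union> {t, -t} - {t} - {-t} = X" using t_notin neg_t_notin by auto
  ultimately have "partition_on (X \<union> {t, -t}) (new_pair Q)"
    unfolding new_pair_def using Qp by (simp add: partition_on_insert Diff_insert[symmetric])
  then show "new_pair Q \<in> sym_partitions (X \<union> {t, -t})"
    using Q t_nonzero by (auto simp: sym_partitions_def new_pair_def)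
  show "restrict_partition X (new_pair Q) = Q"
    using t_notin neg_t_notin
    by (simp add: new_pair_def restrict_partition_insert restrict_partition_self[OF Qp])
qed

lemma join_pair_mem:
  assumes Q: "Q \<in> sym_partitions X" and B: "B \<in> Q"
  shows "join_pair Q B \<in> sym_partitions (X \<union> {t, -t})" "restrict_partition X (join_pair Q B) = Q"
proof -
  have Qp: "partition_on X Q" using Q by (simp add: sym_partitions_def)
  have closed: "uminus ` C \<in> Q" if "C \<in> Q" for C using Q that by (simp add: sym_partitions_def)
  have "partition_on (X \<union> {t, -t}) (join_pair Q B)"
    unfolding join_pair_def
  proof (rule partition_on_extend_blocks[OF Qp])
    show "X \<inter> {t, -t} = {}" using t_notin neg_t_notin by auto
    show "signed_ext B C \<subseteq> {t, -t}" for C by (auto simp: signed_ext_def)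
    show "disjoint_family_on (signed_ext B) Q"
      using t_nonzero by (auto simp: disjoint_family_on_def signed_ext_def)
    have "t \<in> signed_ext B B" "-t \<in> signed_ext B (uminus ` B)" by (auto simp: signed_ext_def)
    then show "{t, -t} \<subseteq> \<Union>(signed_ext B ` Q)" using B closed[OF B] by blast
  qed
  moreover have "uminus ` D \<in> join_pair Q B \<and> (uminus ` D = D \<longrightarrow> 0 \<in> D)"
    if "D \<in> join_pair Q B" for D
  proof -
    obtain C where C: "C \<in> Q" and D: "D = C \<union> signed_ext B C"
      using \<open>D \<in> join_pair Q B\<close> by (auto simp: join_pair_def extend_blocks_def)
    have negD: "uminus ` D = uminus ` C \<union> signed_ext B (uminus ` C)"
      unfolding D by (simp add: image_Un uminus_signed_ext)
    then have "uminus ` D \<in> join_pair Q B"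
      using closed[OF C] by (auto simp: join_pair_def extend_blocks_def)
    moreover have "0 \<in> D" if self_neg: "uminus ` D = D"
    proof -
      have "X \<inter> D = C"
        using partition_on_block_subset[OF Qp C] signed_ext_disjoint[of B C] unfolding D by blast
      moreover have "X \<inter> uminus ` D = uminus ` C"
        using partition_on_block_subset[OF Qp closed[OF C]] signed_ext_disjoint[of B "uminus ` C"]
        unfolding negD by blast
      ultimately have "uminus ` C = C" using self_neg by metis
      then show "0 \<in> D" using Q C D by (simp add: sym_partitions_def)
    qed
    ultimately show ?thesis by blast
  qed
  ultimately show "join_pair Q B \<in> sym_partitions (X \<union> {t, -t})" by (simp add: sym_partitions_def)
  show "restrict_partition X (join_pair Q B) = Q"
    unfolding join_pair_def by (rule restrict_extend_blocks[OF Qp signed_ext_disjoint])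
qed

lemma sym_partition_eq_new_pair:
  assumes P: "P \<in> sym_partitions (X \<union> {t, -t})" and t: "{t} \<in> P"
  shows "P = new_pair (restrict_partition X P)"
proof -
  have Pp: "partition_on (X \<union> {t, -t}) P" using P by (simp add: sym_partitions_def)
  have "{-t} \<in> P" using P t by (force simp: sym_partitions_def)
  define R where "R = P - {{t}, {-t}}"
  have P_eq: "P = new_pair R" using t \<open>{-t} \<in> P\<close> by (auto simp: new_pair_def R_def)
  have "C \<subseteq> X" if "C \<in> R" for C
  proof -
    have "t \<notin> C" "-t \<notin> C"
      using partition_on_block_eq[OF Pp _ t] partition_on_block_eq[OF Pp _ \<open>{-t} \<in> P\<close>] that
      by (auto simp: R_def)
    then show ?thesis using partition_on_block_subset[OF Pp] that by (auto simp: R_def)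
  qed
  then have "disjnt {t} (\<Union>(insert {-t} R))" "disjnt {-t} (\<Union>R)"
    using t_notin neg_t_notin t_nonzero by (auto simp: disjnt_def)
  moreover have "X \<union> {t, -t} - {t} - {-t} = X" using t_notin neg_t_notin by auto
  ultimately have "partition_on X R"
    using Pp unfolding P_eq new_pair_def by (simp add: partition_on_insert Diff_insert[symmetric])
  then have "restrict_partition X P = R"
    unfolding P_eq new_pair_def using t_notin neg_t_notin
    by (simp add: restrict_partition_insert restrict_partition_self)
  then show ?thesis using P_eq by simp
qed

lemma block_of_t_trace:
  assumes P: "P \<in> sym_partitions (X \<union> {t, -t})" and Ct: "Ct \<in> P" "t \<in> Ct" "Ct \<noteq> {t}"
  shows "X \<inter> Ct \<noteq> {}" "uminus ` (X \<inter> Ct) = X \<inter> Ct \<longleftrightarrow> -t \<in> Ct"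
proof -
  have Ct_sub: "Ct \<subseteq> X \<union> {t, -t}"
    using P partition_on_block_subset[OF _ Ct(1)] by (simp add: sym_partitions_def)
  have self_neg_iff: "uminus ` Ct = Ct \<longleftrightarrow> -t \<in> Ct"
    using sym_partitions_neg_block[OF P Ct(1) Ct(1) Ct(2)] Ct(2) by (auto simp: mem_uminus_image)
  show "X \<inter> Ct \<noteq> {}"
  proof
    assume "X \<inter> Ct = {}"
    then have "-t \<in> Ct" using Ct Ct_sub by blast
    then have "0 \<in> Ct" using P Ct(1) self_neg_iff by (simp add: sym_partitions_def)
    then show False using Ct_sub \<open>X \<inter> Ct = {}\<close> t_nonzero by auto
  qed
  then obtain b where "b \<in> X \<inter> Ct" by blast
  show "uminus ` (X \<inter> Ct) = X \<inter> Ct \<longleftrightarrow> -t \<in> Ct"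
  proof
    assume "uminus ` (X \<inter> Ct) = X \<inter> Ct"
    then have "-b \<in> Ct" using \<open>b \<in> X \<inter> Ct\<close> by (auto simp: mem_uminus_image)
    then show "-t \<in> Ct" using sym_partitions_neg_block[OF P Ct(1) Ct(1)] \<open>b \<in> X \<inter> Ct\<close> self_neg_iff by auto
  qed (use uminus_image_Int[OF sym] self_neg_iff in simp)
qed

lemma sym_partition_other_block:
  assumes P: "P \<in> sym_partitions (X \<union> {t, -t})" and Ct: "Ct \<in> P" "t \<in> Ct"
    and C: "C \<in> P" "C \<noteq> Ct" "C \<noteq> uminus ` Ct"
  shows "C \<subseteq> X" "C \<inter> Ct = {}" "C \<inter> uminus ` Ct = {}"
proof -
  have Pp: "partition_on (X \<union> {t, -t}) P" using P by (simp add: sym_partitions_def)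
  have nCt: "uminus ` Ct \<in> P" using P Ct(1) by (simp add: sym_partitions_def)
  show "C \<inter> Ct = {}" "C \<inter> uminus ` Ct = {}"
    using partition_on_block_eq[OF Pp C(1) Ct(1)] partition_on_block_eq[OF Pp C(1) nCt] C(2,3) by blast+
  moreover have "-t \<in> uminus ` Ct" using Ct(2) by (simp add: mem_uminus_image)
  ultimately show "C \<subseteq> X" using partition_on_block_subset[OF Pp C(1)] Ct(2) by blast
qed

lemma sym_partition_eq_join_pair:
  assumes P: "P \<in> sym_partitions (X \<union> {t, -t})" and Ct: "Ct \<in> P" "t \<in> Ct" "Ct \<noteq> {t}"
  defines "B \<equiv> X \<inter> Ct"
  shows "B \<in> restrict_partition X P" "P = join_pair (restrict_partition X P) B"
proof -
  have Pp: "partition_on (X \<union> {t, -t}) P" using P by (simp add: sym_partitions_def)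
  have B: "B \<noteq> {}" "uminus ` B = B \<longleftrightarrow> -t \<in> Ct"
    using block_of_t_trace[OF P Ct] unfolding B_def by simp_all
  have negB: "uminus ` B = X \<inter> uminus ` Ct" unfolding B_def by (rule uminus_image_Int[OF sym])
  show "B \<in> restrict_partition X P"
    using Ct(1) B(1) unfolding B_def restrict_partition_def by blast
  have block: "X \<inter> C \<noteq> {} \<and> C \<inter> {t, -t} = signed_ext B (X \<inter> C)" if C: "C \<in> P" for C
  proof (cases "C = Ct")
    case True
    then show ?thesis using B Ct(2) by (auto simp: signed_ext_def B_def[symmetric])
  next
    case C_ne: False
    show ?thesis
    proof (cases "C = uminus ` Ct")
      case True
      then have "-t \<notin> Ct"
        using C_ne sym_partitions_neg_block[OF P Ct(1) Ct(1) Ct(2)] by auto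
      then have "t \<notin> C" "-t \<in> C" using True Ct(2) by (auto simp: mem_uminus_image)
      moreover have "X \<inter> C = uminus ` B" "uminus ` B \<noteq> B" using True negB B(2) \<open>-t \<notin> Ct\<close> by simp_all
      ultimately show ?thesis using B(1) by (auto simp: signed_ext_def)
    next
      case False
      note other = sym_partition_other_block[OF P Ct(1,2) C C_ne False]
      have "C \<noteq> {}" using partition_onD3[OF Pp] C by metis
      moreover have "C \<noteq> B" "C \<noteq> uminus ` B"
        using other(2,3) B(1) \<open>C \<noteq> {}\<close> negB unfolding B_def by blast+
      ultimately show ?thesis
        using other(1) t_notin neg_t_notin by (auto simp: signed_ext_def Int_absorb1)
    qed
  qed
  show "P = join_pair (restrict_partition X P) B"
    unfolding join_pair_def
    by (rule extend_blocks_restrict_partition[OF Pp]) (use block t_notin neg_t_notin in auto)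
qed

lemma sym_partition_cases:
  assumes P: "P \<in> sym_partitions (X \<union> {t, -t})"
  obtains "P = new_pair (restrict_partition X P)"
    | B where "B \<in> restrict_partition X P" "P = join_pair (restrict_partition X P) B"
proof -
  have "partition_on (X \<union> {t, -t}) P" using P by (simp add: sym_partitions_def)
  then obtain Ct where Ct: "Ct \<in> P" "t \<in> Ct" using partition_on_block_ex[of _ P t] by blast
  show ?thesis
  proof (cases "Ct = {t}")
    case True
    show ?thesis by (rule that(1)[OF sym_partition_eq_new_pair[OF P]]) (use True Ct in simp)
  next
    case False
    show ?thesis using sym_partition_eq_join_pair[OF P Ct False] by (rule that(2))
  qed
qed

lemma sym_partitions_fibre:
  assumes Q: "Q \<in> sym_partitions X"
  shows "{P \<in> sym_partitions (X \<union> {t, -t}). restrict_partition X P = Q}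
    = insert (new_pair Q) (join_pair Q ` Q)"
proof (intro equalityI subsetI)
  fix P assume "P \<in> {P \<in> sym_partitions (X \<union> {t, -t}). restrict_partition X P = Q}"
  then have P: "P \<in> sym_partitions (X \<union> {t, -t})" and res: "restrict_partition X P = Q" by auto
  from P show "P \<in> insert (new_pair Q) (join_pair Q ` Q)"
  proof (cases rule: sym_partition_cases)
    case 1
    then have "P = new_pair Q" unfolding res .
    then show ?thesis by simp
  next
    case (2 B)
    then have "B \<in> Q" "P = join_pair Q B" unfolding res .
    then show ?thesis by simp
  qed
next
  fix P assume "P \<in> insert (new_pair Q) (join_pair Q ` Q)"
  then show "P \<in> {P \<in> sym_partitions (X \<union> {t, -t}). restrict_partition X P = Q}"
    using new_pair_mem[OF Q] join_pair_mem[OF Q] by auto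
qed

lemma card_new_pair:
  assumes Q: "Q \<in> sym_partitions X" and "finite X"
  shows "card (new_pair Q) = card Q + 2"
proof -
  have Qp: "partition_on X Q" using Q by (simp add: sym_partitions_def)
  have "{t} \<notin> Q" "{-t} \<notin> Q"
    using partition_on_block_subset[OF Qp] t_notin neg_t_notin by auto
  then show ?thesis
    using finite_elements[OF \<open>finite X\<close> Qp] t_nonzero by (simp add: new_pair_def)
qed

lemma card_join_pair:
  assumes "Q \<in> sym_partitions X"
  shows "card (join_pair Q B) = card Q"
  unfolding join_pair_def
  by (rule card_extend_blocks[OF _ signed_ext_disjoint]) (use assms in \<open>simp add: sym_partitions_def\<close>)

lemma card_sym_partitions_insert_blocks:
  assumes "finite X"
  shows "card {P \<in> sym_partitions (X \<union> {t, -t}). card P = k}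
    = card {Q \<in> sym_partitions X. card Q + 2 = k} + k * card {Q \<in> sym_partitions X. card Q = k}"
proof (rule card_blocks_by_fibres[where r="restrict_partition X" and new=new_pair and ext=join_pair])
  have "finite (sym_partitions Y)" if "finite Y" for Y
    using finitely_many_partition_on[OF that] by (rule finite_subset[rotated]) (auto simp: sym_partitions_def)
  then show "finite (sym_partitions (X \<union> {t, -t}))" "finite (sym_partitions X)"
    using assms by simp_all
  show "restrict_partition X ` sym_partitions (X \<union> {t, -t}) \<subseteq> sym_partitions X"
    using restrict_sym_partition by blast
  fix Q assume Q: "Q \<in> sym_partitions X"
  then have Qp: "partition_on X Q" by (simp add: sym_partitions_def)
  show "{P \<in> sym_partitions (X \<union> {t, -t}). restrict_partition X P = Q} = insert (new_pair Q) (join_pair Q ` Q)"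
    by (rule sym_partitions_fibre[OF Q])
  show "card (new_pair Q) = card Q + 2" by (rule card_new_pair[OF Q assms])
  show "card (join_pair Q B) = card Q" for B by (rule card_join_pair[OF Q])
  show "finite Q" by (rule finite_elements[OF assms Qp])
  show "new_pair Q \<notin> join_pair Q ` Q"
    using extend_blocks_meets[OF Qp, of "{t}"] t_notin unfolding join_pair_def new_pair_def by auto
  show "inj_on (join_pair Q) Q"
    unfolding join_pair_def
    by (rule inj_on_extend_blocks_marked[OF Qp signed_ext_disjoint, where t=t])
      (use t_nonzero in \<open>auto simp: signed_ext_def\<close>)
qed

end

lemma sym_insertion_interval: "sym_insertion {- int n..int n} (int n + 1)"
  by unfold_locales auto

lemma PiB_Suc: "PiB (Suc n) = sym_partitions ({- int n..int n} \<union> {int n + 1, - (int n + 1)})"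
proof -
  have "{- int (Suc n)..int (Suc n)} = {- int n..int n} \<union> {int n + 1, - (int n + 1)}" by auto
  then show ?thesis by (simp add: PiB_eq_sym_partitions)
qed

lemma PiB_0: "PiB 0 = {{{0}}}"
proof -
  have uniq: "P = {{0}}" if P: "partition_on {0::int} P" for P
  proof -
    have "C = {0}" if "C \<in> P" for C
      using partition_on_block_subset[OF P that] partition_onD3[OF P] that by (metis subset_singletonD)
    moreover have "P \<noteq> {}" using partition_onD1[OF P] by auto
    ultimately show ?thesis by blast
  qed
  have "partition_on {0::int} {{0}}" by (rule partition_on_space) simp
  then have "{{0}} \<in> sym_partitions {0}" by (simp add: sym_partitions_def)
  moreover have "P = {{0}}" if "P \<in> sym_partitions {0}" for P
    by (rule uniq) (use that in \<open>simp add: sym_partitions_def\<close>)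
  ultimately have "sym_partitions {0} = {{{0}}}" by blast
  then show ?thesis by (simp add: PiB_eq_sym_partitions)
qed

lemma card_PiB_Suc_blocks:
  "card {P \<in> PiB (Suc n). card P = k}
    = card {Q \<in> PiB n. card Q + 2 = k} + k * card {Q \<in> PiB n. card Q = k}"
  unfolding PiB_Suc PiB_eq_sym_partitions[of n]
  by (rule sym_insertion.card_sym_partitions_insert_blocks[OF sym_insertion_interval]) simp

lemma StirlingB_0: "StirlingB 0 j = of_bool (j = 0)"
  by (simp add: StirlingB_def PiB_0 Collect_conv_if)

lemma StirlingB_Suc_0: "StirlingB (Suc n) 0 = StirlingB n 0"
  unfolding StirlingB_def card_PiB_Suc_blocks by simp

lemma StirlingB_Suc_Suc:
  "StirlingB (Suc n) (Suc j) = (2 * Suc j + 1) * StirlingB n (Suc j) + StirlingB n j"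
  unfolding StirlingB_def card_PiB_Suc_blocks by simp

lemma odd_card_PiB: "P \<in> PiB n \<Longrightarrow> odd (card P)"
proof (induction n arbitrary: P)
  case 0
  then show ?case by (simp add: PiB_0)
next
  case (Suc n)
  interpret sym_insertion "{- int n..int n}" "int n + 1" by (rule sym_insertion_interval)
  have P: "P \<in> sym_partitions ({- int n..int n} \<union> {int n + 1, - (int n + 1)})"
    using Suc.prems by (simp add: PiB_Suc)
  define Q where "Q = restrict_partition {- int n..int n} P"
  have Q: "Q \<in> sym_partitions {- int n..int n}" "odd (card Q)"
    using restrict_sym_partition[OF P] Suc.IH by (simp_all add: Q_def PiB_eq_sym_partitions)
  from P show ?case
  proof (cases rule: sym_partition_cases)
    case 1
    have "P = new_pair Q" using 1 unfolding Q_def .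
    then have "card P = card Q + 2" using card_new_pair[OF Q(1)] by simp
    then show ?thesis using Q(2) by simp
  next
    case (2 B)
    have "P = join_pair Q B" using 2(2) unfolding Q_def .
    then have "card P = card Q" using card_join_pair[OF Q(1)] by simp
    then show ?thesis using Q(2) by simp
  qed
qed



lemma bellB_eq_sum_StirlingB: "bellB n x = (\<Sum>k\<le>n. of_nat (StirlingB n k) * x ^ (n - k))"
proof -
  have part: "partition_on {- int n..int n} P" if "P \<in> PiB n" for P
    using that by (simp add: PiB_eq_sym_partitions sym_partitions_def)
  have odd_le: "card P = 2 * (card P div 2) + 1" "card P div 2 \<le> n" if "P \<in> PiB n" for P
    using odd_card_PiB[OF that] card_partition_on_le[OF part[OF that]] by auto
  have "bellB n x = (\<Sum>P\<in>PiB n. x ^ (n - card P div 2))"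
    unfolding bellB_def
  proof (intro sum.cong refl)
    fix P assume P: "P \<in> PiB n"
    then have "card (arcs P) = 2 * n + 1 - card P" using card_arcs[OF part] by simp
    then have "card (arcs P) = 2 * (n - card P div 2)" using odd_le[OF P] by linarith
    then show "x ^ (card (arcs P) div 2) = x ^ (n - card P div 2)" by simp
  qed
  also have "\<dots> = (\<Sum>k\<le>n. of_nat (card {P \<in> PiB n. card P div 2 = k}) * x ^ (n - k))"
  proof (rule sum_group_by_value)
    show "finite (PiB n)"
      by (rule finite_subset[OF _ finitely_many_partition_on[of "{- int n..int n}"]]) (auto intro: part)
  qed (use odd_le(2) in auto)
  also have "\<dots> = (\<Sum>k\<le>n. of_nat (StirlingB n k) * x ^ (n - k))"
  proof -
    have "{P \<in> PiB n. card P div 2 = k} = {P \<in> PiB n. card P = 2 * k + 1}" for k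
      using odd_le(1) by force
    then show ?thesis by (simp add: StirlingB_def)
  qed
  finally show ?thesis .
qed

section \<open>Generalised Stirling triangles\<close>

definition seq_shift :: "(nat \<Rightarrow> 'a::zero) \<Rightarrow> nat \<Rightarrow> 'a" where
  "seq_shift w i = (case i of 0 \<Rightarrow> 0 | Suc i' \<Rightarrow> w i')"

definition stirling_step :: "(nat \<Rightarrow> 'a::comm_ring_1) \<Rightarrow> (nat \<Rightarrow> 'a) \<Rightarrow> nat \<Rightarrow> 'a" where
  "stirling_step h w i = h i * w i + seq_shift w i"

definition seq_conv :: "(nat \<Rightarrow> 'a::comm_ring_1) \<Rightarrow> (nat \<Rightarrow> 'a) \<Rightarrow> nat \<Rightarrow> 'a" where
  "seq_conv a b i = (\<Sum>j\<le>i. a j * b (i - j))"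

lemma seq_conv_unit: "seq_conv a (\<lambda>i. of_bool (i = 0)) = a"
  by (rule ext) (simp add: seq_conv_def)

lemma seq_conv_shift: "seq_conv a (seq_shift b) = seq_shift (seq_conv a b)"
proof
  fix i
  show "seq_conv a (seq_shift b) i = seq_shift (seq_conv a b) i"
  proof (cases i)
    case (Suc i')
    have "seq_conv a (seq_shift b) (Suc i') = (\<Sum>j\<le>i'. a j * seq_shift b (Suc i' - j))"
      by (simp add: seq_conv_def seq_shift_def)
    also have "\<dots> = seq_conv a b i'"
      unfolding seq_conv_def by (intro sum.cong refl) (simp add: seq_shift_def Suc_diff_le)
    finally show ?thesis by (simp add: Suc seq_shift_def)
  qed (simp add: seq_conv_def seq_shift_def)
qed

lemma seq_conv_weight:
  assumes "\<And>j l. h (j + l) = e j + f l"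
  shows "h i * seq_conv a b i = seq_conv (\<lambda>j. e j * a j) b i + seq_conv a (\<lambda>l. f l * b l) i"
proof -
  have "h i * seq_conv a b i = (\<Sum>j\<le>i. (e j + f (i - j)) * (a j * b (i - j)))"
    unfolding seq_conv_def sum_distrib_left
  proof (intro sum.cong refl)
    fix j assume "j \<in> {..i}"
    then have "h i = e j + f (i - j)" using assms[of j "i - j"] by simp
    then show "h i * (a j * b (i - j)) = (e j + f (i - j)) * (a j * b (i - j))" by simp
  qed
  also have "\<dots> = seq_conv (\<lambda>j. e j * a j) b i + seq_conv a (\<lambda>l. f l * b l) i"
    unfolding seq_conv_def sum.distrib[symmetric] by (intro sum.cong refl) (simp add: algebra_simps)
  finally show ?thesis .
qed

lemma stirling_step_seq_conv:
  assumes "\<And>j l. h (j + l) = e j + f l"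
  shows "stirling_step h (seq_conv a b) i
           = seq_conv (\<lambda>j. e j * a j) b i + seq_conv a (stirling_step f b) i"
proof -
  have "seq_conv a (stirling_step f b) i = seq_conv a (\<lambda>l. f l * b l) i + seq_conv a (seq_shift b) i"
    by (simp add: stirling_step_def seq_conv_def sum.distrib algebra_simps)
  then show ?thesis
    by (simp add: stirling_step_def seq_conv_weight[where h=h and e=e and f=f, OF assms] seq_conv_shift)
qed

lemma stirling_step_sum:
  "stirling_step h (\<lambda>i. \<Sum>k\<in>K. c k * g k i) i = (\<Sum>k\<in>K. c k * stirling_step h (g k) i)"
  by (cases i) (simp_all add: stirling_step_def seq_shift_def sum.distrib sum_distrib_left algebra_simps)

lemma sum_choose_Suc:
  fixes g :: "nat \<Rightarrow> 'a::comm_ring_1"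
  shows "(\<Sum>k\<le>Suc n. of_nat (Suc n choose k) * g k) = (\<Sum>k\<le>n. of_nat (n choose k) * (g k + g (Suc k)))"
proof -
  have shift: "(\<Sum>k\<le>Suc n. of_nat (Suc n choose k) * g k)
      = g 0 + (\<Sum>k\<le>n. of_nat (Suc n choose Suc k) * g (Suc k))"
    by (simp only: sum.atMost_Suc_shift) simp
  have "(\<Sum>k\<le>n. of_nat (n choose k) * g k) = (\<Sum>k\<le>Suc n. of_nat (n choose k) * g k)"
    by (simp add: binomial_eq_0)
  also have "\<dots> = g 0 + (\<Sum>k\<le>n. of_nat (n choose Suc k) * g (Suc k))"
    by (simp only: sum.atMost_Suc_shift) simp
  finally have "(\<Sum>k\<le>n. of_nat (n choose k) * g k) = g 0 + (\<Sum>k\<le>n. of_nat (n choose Suc k) * g (Suc k))" .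
  then show ?thesis
    unfolding shift by (simp add: sum.distrib algebra_simps)
qed

lemma stirling_step_power_seq_conv:
  assumes "\<And>j l. h (j + l) = e j + f l"
  shows "(stirling_step h ^^ n) (seq_conv a b) i
           = (\<Sum>k\<le>n. of_nat (n choose k) * seq_conv (\<lambda>j. e j ^ (n - k) * a j) ((stirling_step f ^^ k) b) i)"
proof (induction n arbitrary: i)
  case (Suc n)
  have IH: "(stirling_step h ^^ n) (seq_conv a b)
      = (\<lambda>i. \<Sum>k\<le>n. of_nat (n choose k) * seq_conv (\<lambda>j. e j ^ (n - k) * a j) ((stirling_step f ^^ k) b) i)"
    using Suc.IH by (rule ext)
  define g where "g k = seq_conv (\<lambda>j. e j ^ (Suc n - k) * a j) ((stirling_step f ^^ k) b) i" for k
  have "(stirling_step h ^^ Suc n) (seq_conv a b) i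
      = stirling_step h (\<lambda>i. \<Sum>k\<le>n. of_nat (n choose k) * seq_conv (\<lambda>j. e j ^ (n - k) * a j) ((stirling_step f ^^ k) b) i) i"
    by (simp add: IH)
  also have "\<dots> = (\<Sum>k\<le>n. of_nat (n choose k) * stirling_step h (seq_conv (\<lambda>j. e j ^ (n - k) * a j) ((stirling_step f ^^ k) b)) i)"
    by (rule stirling_step_sum)
  also have "\<dots> = (\<Sum>k\<le>n. of_nat (n choose k) * (g k + g (Suc k)))"
    by (intro sum.cong refl) (simp add: stirling_step_seq_conv[where h=h and e=e and f=f, OF assms] g_def Suc_diff_le mult.assoc)
  also have "\<dots> = (\<Sum>k\<le>Suc n. of_nat (Suc n choose k) * g k)"
    by (rule sum_choose_Suc[symmetric])
  finally show ?case by (simp add: g_def)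
qed simp

definition gen_stirling :: "(nat \<Rightarrow> 'a::comm_ring_1) \<Rightarrow> nat \<Rightarrow> nat \<Rightarrow> 'a" where
  "gen_stirling h N = (stirling_step h ^^ N) (\<lambda>i. of_bool (i = 0))"

lemma gen_stirling_0: "gen_stirling h 0 i = of_bool (i = 0)"
  by (simp add: gen_stirling_def)

lemma gen_stirling_Suc: "gen_stirling h (Suc N) = stirling_step h (gen_stirling h N)"
  by (simp add: gen_stirling_def)

lemma gen_stirling_eq_0: "N < i \<Longrightarrow> gen_stirling h N i = 0"
proof (induction N arbitrary: i)
  case (Suc N)
  then obtain i' where "i = Suc i'" "N < i'" by (cases i) auto
  then show ?case using Suc.IH by (simp add: gen_stirling_Suc stirling_step_def seq_shift_def)
qed (simp add: gen_stirling_0)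

lemma sum_seq_conv:
  assumes "\<And>j. p < j \<Longrightarrow> a j = 0" and "\<And>l. q < l \<Longrightarrow> b l = 0" and "p + q \<le> M"
  shows "(\<Sum>i\<le>M. seq_conv a b i) = (\<Sum>j\<le>p. a j) * (\<Sum>l\<le>q. b l)"
proof -
  have "(\<Sum>i\<le>M. seq_conv a b i) = (\<Sum>(j, l)\<in>{(j, l). j + l \<le> M}. a j * b l)"
    unfolding seq_conv_def by (rule sum.triangle_reindex_eq[symmetric])
  also have "\<dots> = (\<Sum>(j, l)\<in>{..p} \<times> {..q}. a j * b l)"
  proof (rule sum.mono_neutral_right)
    show "finite {(j, l). j + l \<le> M}"
      by (rule finite_subset[of _ "{..M} \<times> {..M}"]) auto
  qed (use assms in \<open>auto simp: not_le intro: ccontr\<close>)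
  also have "\<dots> = (\<Sum>j\<le>p. a j) * (\<Sum>l\<le>q. b l)"
    by (simp add: sum_product sum.cartesian_product)
  finally show ?thesis .
qed

lemma sum_gen_stirling_add:
  assumes "\<And>j l. h (j + l) = h j + f l"
  shows "(\<Sum>i\<le>m + n. gen_stirling h (m + n) i)
    = (\<Sum>k\<le>n. of_nat (n choose k) * (\<Sum>j\<le>m. h j ^ (n - k) * gen_stirling h m j)
                 * (\<Sum>l\<le>k. gen_stirling f k l))"
proof -
  have "gen_stirling h (m + n) i = (stirling_step h ^^ n) (seq_conv (gen_stirling h m) (\<lambda>i. of_bool (i = 0))) i" for i
    by (simp add: gen_stirling_def seq_conv_unit funpow_add add.commute[of m])
  also have "\<dots> i = (\<Sum>k\<le>n. of_nat (n choose k)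
      * seq_conv (\<lambda>j. h j ^ (n - k) * gen_stirling h m j) (gen_stirling f k) i)" for i
    by (simp add: stirling_step_power_seq_conv[where h=h and e=h and f=f, OF assms] gen_stirling_def)
  finally have "(\<Sum>i\<le>m + n. gen_stirling h (m + n) i)
      = (\<Sum>k\<le>n. of_nat (n choose k) * (\<Sum>i\<le>m + n. seq_conv (\<lambda>j. h j ^ (n - k) * gen_stirling h m j) (gen_stirling f k) i))"
    by (simp add: sum.swap[of _ "{..m + n}"] sum_distrib_left)
  also have "\<dots> = (\<Sum>k\<le>n. of_nat (n choose k) * ((\<Sum>j\<le>m. h j ^ (n - k) * gen_stirling h m j)
                 * (\<Sum>l\<le>k. gen_stirling f k l)))"
    by (intro sum.cong refl arg_cong2[where f="(*)"] sum_seq_conv) (auto simp: gen_stirling_eq_0)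
  finally show ?thesis by (simp add: mult.assoc)
qed

lemma gen_stirling_closed_form:
  fixes c :: "nat \<Rightarrow> nat" and s :: "nat \<Rightarrow> nat \<Rightarrow> nat" and x :: "'a::comm_ring_1"
  assumes "\<And>i. s 0 i = of_bool (i = 0)"
    and "\<And>N. s (Suc N) 0 = c 0 * s N 0"
    and "\<And>N i. s (Suc N) (Suc i) = c (Suc i) * s N (Suc i) + s N i"
  shows "gen_stirling (\<lambda>i. of_nat (c i) * x) N i = of_nat (s N i) * x ^ (N - i)"
proof -
  have vanish: "N < i \<Longrightarrow> s N i = 0" for N i
  proof (induction N arbitrary: i)
    case (Suc N)
    then obtain i' where "i = Suc i'" "N < i'" by (cases i) auto
    then show ?case using Suc.IH assms(3) by simp
  qed (simp add: assms(1))
  show ?thesis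
  proof (induction N arbitrary: i)
    case (Suc N)
    show ?case
    proof (cases i)
      case 0
      then show ?thesis
        by (simp add: gen_stirling_Suc stirling_step_def seq_shift_def Suc.IH assms(2); simp add: algebra_simps)
    next
      case (Suc i')
      show ?thesis
      proof (cases "i' < N")
        case True
        then have "N - i' = Suc (N - Suc i')" by simp
        then show ?thesis
          by (simp add: \<open>i = Suc i'\<close> gen_stirling_Suc stirling_step_def seq_shift_def Suc.IH assms(3); simp add: algebra_simps)
      next
        case False
        then show ?thesis
          by (simp add: \<open>i = Suc i'\<close> gen_stirling_Suc stirling_step_def seq_shift_def Suc.IH assms(3) vanish)
      qed
    qed
  qed (simp add: gen_stirling_0 assms(1))
qed

lemma gen_stirling_Stirling:
  "gen_stirling (\<lambda>i. of_nat i * x) N i = of_nat (Stirling N i) * (x::'a::comm_ring_1) ^ (N - i)"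
proof -
  have "gen_stirling (\<lambda>i. of_nat (id i) * x) N i = of_nat (Stirling N i) * x ^ (N - i)"
  proof (rule gen_stirling_closed_form)
    show "Stirling 0 i = of_bool (i = 0)" for i by (cases i) simp_all
  qed simp_all
  then show ?thesis by simp
qed

lemma gen_stirling_StirlingB:
  "gen_stirling (\<lambda>i. of_nat (2 * i + 1) * x) N i = of_nat (StirlingB N i) * (x::'a::comm_ring_1) ^ (N - i)"
  by (rule gen_stirling_closed_form) (simp_all add: StirlingB_0 StirlingB_Suc_0 StirlingB_Suc_Suc)

lemma sum_binomial_rearrange:
  fixes x :: "'a::comm_ring_1"
  shows "(\<Sum>k\<le>n. of_nat (n choose k) * (\<Sum>j\<le>m. (c j * x) ^ (n - k) * (s j * x ^ (m - j))) * b k)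
    = (\<Sum>j=0..m. \<Sum>k=0..n. x ^ (m + n - j - k) * c j ^ (n - k) * of_nat (n choose k) * s j * b k)"
proof -
  have "x ^ (m + n - j - k) = x ^ (m - j) * x ^ (n - k)" if "j \<le> m" "k \<le> n" for j k
    using that by (simp flip: power_add)
  then show ?thesis
    by (simp add: atLeast0AtMost sum_distrib_left sum_distrib_right sum.swap[of _ "{..n}"]
        power_mult_distrib ac_simps)
qed

theorem proposition5p3:
  fixes x :: "'a::comm_ring_1" and m n :: nat
  shows "(bellA (m + n) x =
           (\<Sum>j=0..m. \<Sum>k=0..n. x ^ (m + n - j - k) * of_nat j ^ (n - k)
              * of_nat (n choose k) * of_nat (Stirling m j) * bellA k x)) \<and>
         (bellB (m + n) x =
           (\<Sum>j=0..m. \<Sum>k=0..n. x ^ (m + n - j - k) * of_nat (2 * j + 1) ^ (n - k)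
              * of_nat (n choose k) * of_nat (StirlingB m j) * bellA k (2 * x)))"
proof
  let ?h = "\<lambda>i. of_nat i * x"
  have "bellA (m + n) x = (\<Sum>i\<le>m + n. gen_stirling ?h (m + n) i)"
    unfolding bellA_eq_sum_Stirling gen_stirling_Stirling ..
  also have "\<dots> = (\<Sum>k\<le>n. of_nat (n choose k) * (\<Sum>j\<le>m. ?h j ^ (n - k) * gen_stirling ?h m j)
                  * (\<Sum>l\<le>k. gen_stirling ?h k l))"
    by (rule sum_gen_stirling_add) (simp add: distrib_right)
  also have "\<dots> = (\<Sum>j=0..m. \<Sum>k=0..n. x ^ (m + n - j - k) * of_nat j ^ (n - k)
              * of_nat (n choose k) * of_nat (Stirling m j) * bellA k x)"
    unfolding gen_stirling_Stirling bellA_eq_sum_Stirling by (rule sum_binomial_rearrange)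
  finally show "bellA (m + n) x = \<dots>" .
next
  let ?h = "\<lambda>i. of_nat (2 * i + 1) * x" and ?f = "\<lambda>i. of_nat i * (2 * x)"
  have "bellB (m + n) x = (\<Sum>i\<le>m + n. gen_stirling ?h (m + n) i)"
    unfolding bellB_eq_sum_StirlingB gen_stirling_StirlingB ..
  also have "\<dots> = (\<Sum>k\<le>n. of_nat (n choose k) * (\<Sum>j\<le>m. ?h j ^ (n - k) * gen_stirling ?h m j)
                  * (\<Sum>l\<le>k. gen_stirling ?f k l))"
    by (rule sum_gen_stirling_add) (simp add: algebra_simps)
  also have "\<dots> = (\<Sum>j=0..m. \<Sum>k=0..n. x ^ (m + n - j - k) * of_nat (2 * j + 1) ^ (n - k)
              * of_nat (n choose k) * of_nat (StirlingB m j) * bellA k (2 * x))"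
    unfolding gen_stirling_Stirling gen_stirling_StirlingB bellA_eq_sum_Stirling
    by (rule sum_binomial_rearrange)
  finally show "bellB (m + n) x = \<dots>" .
qed

end
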